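(* Let $\mu,\nu,\rho\in\mathbb{N}$ with $2\rho<\nu$ and $P(\mu+\nu)\le\rho$. Let $\mathcal E$ be the set of pairs $(m,n)\in\{q^{\mu-2},\dots,q^\mu-1\}\times\{q^{\nu-2},\dots,q^\nu-1\}$ for which there exists an integer $0\le k<q^{\mu+\rho}$ with $$f_P(mn+k)\overline{f_P(mn)}\ne f_P^{(\mu+2\rho)}(mn+k)\overline{f_P^{(\mu+2\rho)}(mn)}.$$ Then $\#\mathcal E\ll(\log q)\,q^{\mu+\nu-\rho+P(\mu+\nu+1)}$.
   Context: Fix an integer $q\ge2$. For an integer $n\ge0$, $\varepsilon_i(n)$ is the $i$-th digit of $n$ in base $q$ ($\varepsilon_0$ the units digit). For real $x>0$, $T_q(x)=\lfloor\log x/\log q\rfloor$. $e(x)=\exp(2\pi ix)$. $P:\mathbb{N}\to\mathbb{N}$ is a nondecreasing integer-valued function. For integers $x,y\ge0$, $a_P(x,y)=\sum_{i\ge0}\varepsilon_{i+P(y)}(x)\cdots\varepsilon_i(x)$. Fix $\alpha\in\mathbb{R}$; $f_P(x,y)=e(\alpha a_P(x,y))$ and $f_P(n)=f_P(n,T_q(n))$. For an integer $\rho\ge0$, $f_P^{(\rho)}(x,y)=f_P(x\bmod q^\rho,y)$ and $f_P^{(\rho)}(n)=f_P^{(\rho)}(n,T_q(n))$. The implied constant depends at most on $q$. *)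

theory Defs
  imports Complex_Main
begin

definition digit :: "nat \<Rightarrow> nat \<Rightarrow> nat \<Rightarrow> nat" where
  "digit q i n = (n div q ^ i) mod q"

definition Tq :: "nat \<Rightarrow> nat \<Rightarrow> nat" where
  "Tq q x = nat \<lfloor>ln (real x) / ln (real q)\<rfloor>"

definition e :: "real \<Rightarrow> complex" where
  "e x = exp (2 * of_real pi * \<i> * of_real x)"

text \<open>a_P(x,y) = sum over i >= 0 of digit_{i+P(y)}(x) * ... * digit_i(x);
  the summand is nonzero for only finitely many i, so we sum over its support.\<close>
definition aP :: "nat \<Rightarrow> (nat \<Rightarrow> nat) \<Rightarrow> nat \<Rightarrow> nat \<Rightarrow> nat" where
  "aP q P x y = (\<Sum>i \<in> {i. (\<Prod>j\<le>P y. digit q (i + j) x) \<noteq> 0}.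
                    \<Prod>j\<le>P y. digit q (i + j) x)"

definition fP2 :: "nat \<Rightarrow> real \<Rightarrow> (nat \<Rightarrow> nat) \<Rightarrow> nat \<Rightarrow> nat \<Rightarrow> complex" where
  "fP2 q \<alpha> P x y = e (\<alpha> * real (aP q P x y))"

definition fP :: "nat \<Rightarrow> real \<Rightarrow> (nat \<Rightarrow> nat) \<Rightarrow> nat \<Rightarrow> complex" where
  "fP q \<alpha> P n = fP2 q \<alpha> P n (Tq q n)"

definition fPrho2 :: "nat \<Rightarrow> real \<Rightarrow> (nat \<Rightarrow> nat) \<Rightarrow> nat \<Rightarrow> nat \<Rightarrow> nat \<Rightarrow> complex" where
  "fPrho2 q \<alpha> P \<rho> x y = fP2 q \<alpha> P (x mod q ^ \<rho>) y"

definition fPrho :: "nat \<Rightarrow> real \<Rightarrow> (nat \<Rightarrow> nat) \<Rightarrow> nat \<Rightarrow> nat \<Rightarrow> complex" where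
  "fPrho q \<alpha> P \<rho> n = fPrho2 q \<alpha> P \<rho> n (Tq q n)"

end

theory Submission
  imports Defs
begin

text \<open>
  Put \<open>s = \<mu> + 2\<rho> - P(\<mu>+\<nu>)\<close>. If adding \<open>k < q^(\<mu>+\<rho>)\<close> to \<open>mn\<close> causes no carry into
  position \<open>s\<close>, then \<open>mn\<close> and \<open>mn + k\<close> have the same digits from position \<open>s\<close> on and the same
  value of \<open>T_q\<close>. Every product of \<open>P(y)+1\<close> consecutive digits occurring in \<open>a_P\<close> then either
  starts at or above \<open>s\<close>, and is the same for \<open>mn\<close> and \<open>mn + k\<close>, or lies entirely below
  \<open>\<mu> + 2\<rho>\<close>, and is not affected by the truncation; so both sides of the defining inequality
  agree (if \<open>mn < q^s\<close> there is no truncation at all). Hence an exceptional pair satisfies \<open>(mn mod q^s) + q^(\<mu>+\<rho>) > q^s\<close>. For fixed \<open>m\<close>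
  the multiples \<open>mn\<close> with \<open>n < q^\<nu>\<close> meet at most \<open>mq^\<nu>/q^s + 1\<close> such windows below
  multiples of \<open>q^s\<close>, each at most \<open>q^(\<mu>+\<rho>)/m + 1\<close> times, which gives
  \<open>O(q \<cdot> q^(\<nu>-\<rho>+P(\<mu>+\<nu>)))\<close> values of \<open>n\<close>.
\<close>

lemma div_pow_mod_pow:
  fixes q x :: nat
  assumes "s \<le> l" "q > 0"
  shows "(x mod q ^ l) div q ^ s = x div q ^ s mod q ^ (l - s)"
proof -
  have "q ^ l = q ^ s * q ^ (l - s)"
    using assms by (simp flip: power_add)
  then show ?thesis
    using assms by (simp add: mod_mult2_eq)
qed

lemma digit_mod_pow:
  assumes "i < l" "q > 0"
  shows "digit q i (x mod q ^ l) = digit q i x"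
proof -
  have "q dvd q ^ (l - i)"
    using assms by simp
  then show ?thesis
    using assms by (simp add: digit_def div_pow_mod_pow mod_mod_cancel)
qed

lemma digit_eq_if_div_pow_eq:
  assumes "s \<le> i" "x div q ^ s = x' div q ^ s"
  shows "digit q i x = digit q i x'"
proof -
  have "q ^ i = q ^ s * q ^ (i - s)"
    using assms by (simp flip: power_add)
  then show ?thesis
    using assms by (simp add: digit_def div_mult2_eq)
qed

lemma pow_le_if_digit_nonzero:
  assumes "digit q i x \<noteq> 0"
  shows "q ^ i \<le> x"
proof -
  have "x div q ^ i \<noteq> 0"
    using assms by (metis digit_def div_0 mod_0)
  then show ?thesis
    by (metis div_less not_le)
qed

definition aP_term :: "nat \<Rightarrow> (nat \<Rightarrow> nat) \<Rightarrow> nat \<Rightarrow> nat \<Rightarrow> nat \<Rightarrow> nat" where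
  "aP_term q P x y i = (\<Prod>j\<le>P y. digit q (i + j) x)"

lemma aP_eq_sum_lessThan:
  assumes "q \<ge> 2" "x \<le> M"
  shows "aP q P x y = (\<Sum>i<M. aP_term q P x y i)"
proof -
  have "i < M" if "aP_term q P x y i \<noteq> 0" for i
  proof -
    have "digit q i x \<noteq> 0"
      using that by (force simp: aP_term_def)
    then have "q ^ i \<le> x"
      by (rule pow_le_if_digit_nonzero)
    moreover have "i < q ^ i"
      using less_exp[of i] power_mono[of 2 q i] assms(1) by linarith
    ultimately show ?thesis
      using assms(2) by linarith
  qed
  then show ?thesis
    unfolding aP_def aP_term_def[symmetric]
    by (intro sum.mono_neutral_left) auto
qed

lemma aP_sub_aP_mod_eq:
  assumes q: "q \<ge> 2" and l: "P y + s \<le> l" and x: "x div q ^ s = x' div q ^ s"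
  shows "real (aP q P x y) - real (aP q P (x mod q ^ l) y)
       = real (aP q P x' y) - real (aP q P (x' mod q ^ l) y)"
proof -
  have x_mod: "(x mod q ^ l) div q ^ s = (x' mod q ^ l) div q ^ s"
    using assms by (simp add: div_pow_mod_pow)
  have "real (aP_term q P x y i) - real (aP_term q P (x mod q ^ l) y i)
      = real (aP_term q P x' y i) - real (aP_term q P (x' mod q ^ l) y i)" for i
  proof (cases "i < s")
    case True
    then have "aP_term q P (z mod q ^ l) y i = aP_term q P z y i" for z
      using q l unfolding aP_term_def by (intro prod.cong) (auto intro!: digit_mod_pow)
    then show ?thesis
      by simp
  next
    case False
    then have "aP_term q P x y i = aP_term q P x' y i"
      "aP_term q P (x mod q ^ l) y i = aP_term q P (x' mod q ^ l) y i"
      using x x_mod unfolding aP_term_def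
      by (auto intro!: prod.cong digit_eq_if_div_pow_eq[of s])
    then show ?thesis
      by simp
  qed
  moreover have "x \<le> x + x'" "x' \<le> x + x'" "x mod q ^ l \<le> x + x'" "x' mod q ^ l \<le> x + x'"
    by (simp_all add: le_trans[OF mod_less_eq_dividend])
  ultimately show ?thesis
    using q by (simp add: aP_eq_sum_lessThan[of q _ "x + x'"] flip: sum_subtractf)
qed

lemma Tq_eq_iff:
  assumes "q \<ge> 2" "x > 0"
  shows "Tq q x = t \<longleftrightarrow> q ^ t \<le> x \<and> x < q ^ (t + 1)"
proof -
  have "Tq q x = nat \<lfloor>log q x\<rfloor>"
    by (simp add: Tq_def log_def)
  moreover have "\<lfloor>log q x\<rfloor> \<ge> 0"
    using assms by simp
  ultimately have "Tq q x = t \<longleftrightarrow> \<lfloor>log q x\<rfloor> = int t"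
    by linarith
  then show ?thesis
    using assms by (simp add: floor_log_nat_eq_powr_iff)
qed

lemma Tq_less:
  assumes q: "q \<ge> 2" and "x < q ^ t" "t > 0"
  shows "Tq q x < t"
proof (cases "x = 0")
  case True
  then show ?thesis
    using assms by (simp add: Tq_def)
next
  case False
  then have "q ^ Tq q x \<le> x"
    using Tq_eq_iff[OF q, of x "Tq q x"] by simp
  then have "q ^ Tq q x < q ^ t"
    using assms by linarith
  then show ?thesis
    using q by (simp add: power_less_imp_less_exp)
qed

lemma Tq_add_eq:
  assumes q: "q \<ge> 2" and "q ^ s \<le> x" and high: "(x + k) div q ^ s = x div q ^ s"
  shows "Tq q (x + k) = Tq q x"
proof -
  define t where "t = Tq q x"
  have qs: "q ^ s > 0"
    using q by simp
  have x: "q ^ t \<le> x" "x < q ^ (t + 1)"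
    using Tq_eq_iff[OF q, of x t] assms qs by (simp_all add: t_def)
  then have "s \<le> t"
    using q assms(2) power_less_imp_less_exp[of q s "t + 1"] by simp
  then have split: "q ^ (t + 1) = q ^ s * q ^ (t + 1 - s)"
    by (simp flip: power_add)
  have "x div q ^ s < q ^ (t + 1 - s)"
    using x(2) qs by (simp only: split div_less_iff_less_mult mult.commute)
  then have "(x + k) div q ^ s < q ^ (t + 1 - s)"
    using high by simp
  then have "x + k < q ^ (t + 1 - s) * q ^ s"
    using qs div_less_iff_less_mult by blast
  then have "x + k < q ^ (t + 1)"
    by (simp only: split mult.commute)
  then show ?thesis
    using Tq_eq_iff[OF q, of "x + k" t] x assms(2) qs by (simp add: t_def)
qed

lemma e_mult_cnj: "e a * cnj (e b) = e (a - b)"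
proof -
  have "e x = cis (2 * pi * x)" for x
    by (simp add: e_def cis_conv_exp algebra_simps)
  then show ?thesis
    by (simp add: cis_cnj cis_mult algebra_simps)
qed

lemma fP_correlation_eq_truncated:
  assumes q: "q \<ge> 2" and no_carry: "x mod q ^ s + k < q ^ s"
    and l: "P (Tq q (x + k)) + s \<le> l"
  shows "fP q \<alpha> P (x + k) * cnj (fP q \<alpha> P x)
       = fPrho q \<alpha> P l (x + k) * cnj (fPrho q \<alpha> P l x)"
proof (cases "q ^ s \<le> x")
  case False
  have "q ^ s \<le> q ^ l"
    using q l by (simp add: power_increasing)
  then have "x + k < q ^ l"
    using False no_carry by simp
  then show ?thesis
    by (simp add: fPrho_def fPrho2_def fP_def)
next
  case True
  have high: "(x + k) div q ^ s = x div q ^ s"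
    using no_carry div_add1_eq[of x k "q ^ s"] by simp
  have T: "Tq q (x + k) = Tq q x"
    using Tq_add_eq[OF q True high] .
  have "real (aP q P (x + k) (Tq q x)) - real (aP q P ((x + k) mod q ^ l) (Tq q x))
      = real (aP q P x (Tq q x)) - real (aP q P (x mod q ^ l) (Tq q x))"
    using aP_sub_aP_mod_eq[OF q _ high] l T by simp
  then have "\<alpha> * real (aP q P (x + k) (Tq q x)) - \<alpha> * real (aP q P x (Tq q x))
      = \<alpha> * real (aP q P ((x + k) mod q ^ l) (Tq q x)) - \<alpha> * real (aP q P (x mod q ^ l) (Tq q x))"
    by (simp flip: right_diff_distrib)
  then show ?thesis
    by (simp only: fP_def fPrho_def fPrho2_def fP2_def e_mult_cnj T)
qed

lemma finite_mult_less:
  fixes m c :: nat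
  assumes "m > 0"
  shows "finite {n. m * n < c}"
proof -
  have "{n. m * n < c} \<subseteq> {..<c}"
  proof
    fix n assume "n \<in> {n. m * n < c}"
    moreover have "n \<le> m * n"
      using assms by simp
    ultimately show "n \<in> {..<c}"
      by (metis le_less_trans lessThan_iff mem_Collect_eq)
  qed
  then show ?thesis
    by (rule finite_subset) simp
qed

lemma card_mult_between_le:
  fixes m h c :: nat
  assumes m: "m > 0"
  shows "card {n. c < m * n + h \<and> m * n < c} \<le> h div m + 1"
proof (cases "{n. c < m * n + h \<and> m * n < c} = {}")
  case True
  then show ?thesis
    unfolding True by simp
next
  case False
  define S where "S = {n. c < m * n + h \<and> m * n < c}"
  have fin: "finite S"
    using finite_mult_less[OF m, of c] by (rule finite_subset[rotated]) (auto simp: S_def)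
  define n0 where "n0 = Min S"
  have n0: "n0 \<in> S"
    using fin False Min_in unfolding n0_def S_def by blast
  have "S \<subseteq> {n0..n0 + h div m}"
  proof
    fix n assume n: "n \<in> S"
    then have "n0 \<le> n"
      using fin by (simp add: n0_def)
    moreover have "m * n < m * n0 + h"
      using n n0 by (simp add: S_def)
    moreover have "m * n0 \<le> m * n"
      using \<open>n0 \<le> n\<close> by simp
    ultimately have "m * (n - n0) < h"
      by (simp add: diff_mult_distrib2 less_diff_conv2)
    then have "n - n0 \<le> h div m"
      using m by (simp add: less_eq_div_iff_mult_less_eq mult.commute)
    with \<open>n0 \<le> n\<close> show "n \<in> {n0..n0 + h div m}"
      by simp
  qed
  then have "card S \<le> card {n0..n0 + h div m}"
    by (intro card_mono) simp_all
  then show ?thesis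
    by (simp add: S_def)
qed

lemma card_mult_mod_near_modulus_le:
  fixes m V Q h :: nat
  assumes m: "m > 0" and Q: "Q > 0"
  shows "card {n. n < V \<and> Q < (m * n) mod Q + h} \<le> (m * V div Q + 1) * (h div m + 1)"
proof -
  let ?A = "\<lambda>j. {n. j * Q + Q < m * n + h \<and> m * n < j * Q + Q}"
  have cover: "{n. n < V \<and> Q < (m * n) mod Q + h} \<subseteq> (\<Union>j\<le>m * V div Q. ?A j)"
  proof
    fix n assume n: "n \<in> {n. n < V \<and> Q < (m * n) mod Q + h}"
    define j where "j = m * n div Q"
    have "m * n = j * Q + (m * n) mod Q" "(m * n) mod Q < Q"
      using Q by (simp_all add: j_def)
    then have "n \<in> ?A j"
      using n by auto
    moreover have "j \<le> m * V div Q"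
      using n by (simp add: j_def div_le_mono)
    ultimately show "n \<in> (\<Union>j\<le>m * V div Q. ?A j)"
      by auto
  qed
  have "finite (?A j)" for j
    using finite_mult_less[OF m, of "j * Q + Q"] by (rule finite_subset[rotated]) auto
  then have "card {n. n < V \<and> Q < (m * n) mod Q + h} \<le> card (\<Union>j\<le>m * V div Q. ?A j)"
    using cover by (intro card_mono) auto
  also have "\<dots> \<le> (\<Sum>j\<le>m * V div Q. card (?A j))"
    by (rule card_UN_le) simp
  also have "\<dots> \<le> (\<Sum>j\<le>m * V div Q. h div m + 1)"
    by (intro sum_mono card_mult_between_le m)
  finally show ?thesis
    by simp
qed

lemma div_succ_mult_div_succ_le:
  fixes q m V Q h R :: nat
  assumes m: "m > 0" and Q: "Q > 0" and R: "R \<ge> 1"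
    and VhRQ: "V * h = R * Q" and mV: "m * V \<le> R * Q" and h: "h \<le> m * (q * R)"
  shows "(m * V div Q + 1) * (h div m + 1) \<le> (3 + q) * R"
proof -
  define X Y where "X = m * V div Q" and "Y = h div m"
  have XQ: "X * Q \<le> m * V" and Ym: "Y * m \<le> h"
    by (simp_all add: X_def Y_def div_times_less_eq_dividend)
  have "X * Q \<le> R * Q"
    using XQ mV by (rule order_trans)
  then have XR: "X \<le> R"
    using Q by simp
  have "Y * m \<le> (q * R) * m"
    using order_trans[OF Ym h] by (simp only: ac_simps)
  then have YR: "Y \<le> q * R"
    using m by simp
  have "(X * Y) * (Q * m) = (X * Q) * (Y * m)"
    by (simp add: ac_simps)
  also have "\<dots> \<le> (m * V) * h"
    using XQ Ym by (rule mult_le_mono)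
  also have "\<dots> = R * (Q * m)"
    using VhRQ by (simp add: ac_simps)
  finally have "X * Y \<le> R"
    using Q m by simp
  then have "(X + 1) * (Y + 1) \<le> R + R + q * R + R"
    using XR YR R by (simp add: algebra_simps)
  then show ?thesis
    by (simp add: X_def Y_def algebra_simps)
qed

lemma card_near_carry_le:
  assumes q: "q \<ge> 2" and m: "q ^ (\<mu> - 2) \<le> m" "m < q ^ \<mu>"
    and p: "p \<le> \<rho>" and \<rho>: "2 * \<rho> < \<nu>"
  shows "card {n. n < q ^ \<nu> \<and> q ^ (\<mu> + 2 * \<rho> - p) < (m * n) mod q ^ (\<mu> + 2 * \<rho> - p) + q ^ (\<mu> + \<rho>)}
    \<le> (3 + q) * q ^ (\<nu> - \<rho> + p)"
proof (rule card_mult_mod_near_modulus_le[THEN order_trans])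
  have "q ^ (\<mu> - 2) > 0"
    using q by simp
  then show m0: "m > 0"
    using m(1) by linarith
  have "q ^ \<mu> \<le> q ^ (\<mu> - 2 + 2)"
    using q by (intro power_increasing) auto
  also have "\<dots> \<le> m * q ^ 2"
    using m(1) by (simp only: power_add mult_le_mono1)
  finally have m_big: "q ^ \<mu> \<le> m * q ^ 2" .
  have "q ^ (\<rho> + 2) \<le> q ^ Suc (\<nu> - \<rho> + p)"
    using q p \<rho> by (intro power_increasing) auto
  then have q_\<rho>: "q ^ 2 * q ^ \<rho> \<le> q * q ^ (\<nu> - \<rho> + p)"
    by (simp only: power_add power_Suc mult.commute)
  have "q ^ (\<mu> + \<rho>) = q ^ \<mu> * q ^ \<rho>"
    by (rule power_add)
  also have "\<dots> \<le> m * q ^ 2 * q ^ \<rho>"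
    using m_big by simp
  also have "\<dots> \<le> m * (q * q ^ (\<nu> - \<rho> + p))"
    using q_\<rho> by (simp add: mult.assoc)
  finally have h: "q ^ (\<mu> + \<rho>) \<le> m * (q * q ^ (\<nu> - \<rho> + p))" .
  have "q ^ \<mu> \<le> q ^ (\<mu> + \<rho>)"
    using q by (intro power_increasing) auto
  then have m_small: "m * q ^ \<nu> \<le> q ^ \<nu> * q ^ (\<mu> + \<rho>)"
    using m(2) by (simp add: mult.commute[of m])
  have "\<nu> + (\<mu> + \<rho>) = (\<nu> - \<rho> + p) + (\<mu> + 2 * \<rho> - p)"
    using p \<rho> by simp
  then have exponents: "q ^ \<nu> * q ^ (\<mu> + \<rho>) = q ^ (\<nu> - \<rho> + p) * q ^ (\<mu> + 2 * \<rho> - p)"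
    by (metis power_add)
  show "(m * q ^ \<nu> div q ^ (\<mu> + 2 * \<rho> - p) + 1) * (q ^ (\<mu> + \<rho>) div m + 1)
      \<le> (3 + q) * q ^ (\<nu> - \<rho> + p)"
    using q h m0 m_small exponents by (intro div_succ_mult_div_succ_le) simp_all
  show "q ^ (\<mu> + 2 * \<rho> - p) > 0"
    using q by simp
qed

lemma exceptional_pair_near_carry:
  assumes q: "q \<ge> 2" and P: "mono P" "P (\<mu> + \<nu>) \<le> \<rho>" and \<rho>: "2 * \<rho> < \<nu>"
    and m: "m < q ^ \<mu>" and n: "n < q ^ \<nu>" and k: "k < q ^ (\<mu> + \<rho>)"
    and exceptional: "fP q \<alpha> P (m * n + k) * cnj (fP q \<alpha> P (m * n))
      \<noteq> fPrho q \<alpha> P (\<mu> + 2 * \<rho>) (m * n + k) * cnj (fPrho q \<alpha> P (\<mu> + 2 * \<rho>) (m * n))"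
  shows "q ^ (\<mu> + 2 * \<rho> - P (\<mu> + \<nu>))
    < (m * n) mod q ^ (\<mu> + 2 * \<rho> - P (\<mu> + \<nu>)) + q ^ (\<mu> + \<rho>)"
proof (rule ccontr)
  define s where "s = \<mu> + 2 * \<rho> - P (\<mu> + \<nu>)"
  assume "\<not> ?thesis"
  then have no_carry: "(m * n) mod q ^ s + k < q ^ s"
    unfolding s_def using k by linarith
  have "q ^ (\<mu> + \<rho>) \<le> q ^ (\<mu> + \<nu>)"
    using q \<rho> by (intro power_increasing) auto
  moreover have "m * n \<le> q ^ (\<mu> + \<nu>)"
    using m n by (simp add: power_add mult_le_mono)
  moreover have "2 * q ^ (\<mu> + \<nu>) \<le> q ^ (\<mu> + \<nu> + 1)"
    using q by simp
  ultimately have "m * n + k < q ^ (\<mu> + \<nu> + 1)"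
    using k by linarith
  then have "Tq q (m * n + k) < \<mu> + \<nu> + 1"
    using Tq_less[OF q] by simp
  then have "P (Tq q (m * n + k)) \<le> P (\<mu> + \<nu>)"
    using P(1) by (simp add: monoD)
  then have window: "P (Tq q (m * n + k)) + s \<le> \<mu> + 2 * \<rho>"
    unfolding s_def using P(2) by linarith
  have "fP q \<alpha> P (m * n + k) * cnj (fP q \<alpha> P (m * n))
      = fPrho q \<alpha> P (\<mu> + 2 * \<rho>) (m * n + k) * cnj (fPrho q \<alpha> P (\<mu> + 2 * \<rho>) (m * n))"
    by (rule fP_correlation_eq_truncated[where P = P, OF q no_carry window])
  with exceptional show False ..
qed

definition exceptional_pairs :: "nat \<Rightarrow> real \<Rightarrow> (nat \<Rightarrow> nat) \<Rightarrow> nat \<Rightarrow> nat \<Rightarrow> nat \<Rightarrow> (nat \<times> nat) set" where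
  "exceptional_pairs q \<alpha> P \<mu> \<nu> \<rho> = {(m, n). q ^ (\<mu> - 2) \<le> m \<and> m \<le> q ^ \<mu> - 1 \<and>
                        q ^ (\<nu> - 2) \<le> n \<and> n \<le> q ^ \<nu> - 1 \<and>
        (\<exists>k < q ^ (\<mu> + \<rho>).
           fP q \<alpha> P (m * n + k) * cnj (fP q \<alpha> P (m * n)) \<noteq>
           fPrho q \<alpha> P (\<mu> + 2 * \<rho>) (m * n + k) * cnj (fPrho q \<alpha> P (\<mu> + 2 * \<rho>) (m * n)))}"

lemma card_exceptional_pairs_le:
  assumes q: "q \<ge> 2" and P: "mono P" "P (\<mu> + \<nu>) \<le> \<rho>" and \<rho>: "2 * \<rho> < \<nu>"
  shows "card (exceptional_pairs q \<alpha> P \<mu> \<nu> \<rho>) \<le> (3 + q) * q ^ (\<mu> + \<nu> - \<rho> + P (\<mu> + \<nu>))"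
proof -
  define p where "p = P (\<mu> + \<nu>)"
  define M where "M = {q ^ (\<mu> - 2)..<q ^ \<mu>}"
  define N where "N m = {n. n < q ^ \<nu> \<and>
    q ^ (\<mu> + 2 * \<rho> - p) < (m * n) mod q ^ (\<mu> + 2 * \<rho> - p) + q ^ (\<mu> + \<rho>)}" for m
  have sub: "exceptional_pairs q \<alpha> P \<mu> \<nu> \<rho> \<subseteq> Sigma M N"
  proof
    fix z assume "z \<in> exceptional_pairs q \<alpha> P \<mu> \<nu> \<rho>"
    then obtain m n k where z: "z = (m, n)" and m: "q ^ (\<mu> - 2) \<le> m" "m \<le> q ^ \<mu> - 1"
      and n: "n \<le> q ^ \<nu> - 1" and k: "k < q ^ (\<mu> + \<rho>)"
      and exceptional: "fP q \<alpha> P (m * n + k) * cnj (fP q \<alpha> P (m * n))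
        \<noteq> fPrho q \<alpha> P (\<mu> + 2 * \<rho>) (m * n + k) * cnj (fPrho q \<alpha> P (\<mu> + 2 * \<rho>) (m * n))"
      unfolding exceptional_pairs_def by blast
    have "q ^ \<mu> > 0" "q ^ \<nu> > 0"
      using q by simp_all
    then have "m < q ^ \<mu>" "n < q ^ \<nu>"
      using m n by linarith+
    then show "z \<in> Sigma M N"
      using exceptional_pair_near_carry[OF q P \<rho> _ _ k exceptional] z m
      by (simp add: M_def N_def p_def)
  qed
  have fin: "finite M" "\<forall>m\<in>M. finite (N m)"
    by (simp_all add: M_def N_def)
  have "card (exceptional_pairs q \<alpha> P \<mu> \<nu> \<rho>) \<le> card (Sigma M N)"
    using sub fin by (intro card_mono) auto
  also have "\<dots> = (\<Sum>m\<in>M. card (N m))"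
    using fin by (rule card_SigmaI)
  also have "\<dots> \<le> (\<Sum>m\<in>M. (3 + q) * q ^ (\<nu> - \<rho> + p))"
    unfolding N_def using card_near_carry_le[OF q _ _ P(2)[folded p_def] \<rho>]
    by (intro sum_mono) (simp add: M_def)
  also have "\<dots> \<le> q ^ \<mu> * ((3 + q) * q ^ (\<nu> - \<rho> + p))"
    by (simp add: M_def)
  also have "\<dots> = (3 + q) * q ^ (\<mu> + (\<nu> - \<rho> + p))"
    by (simp add: power_add ac_simps)
  also have "\<mu> + (\<nu> - \<rho> + p) = \<mu> + \<nu> - \<rho> + p"
    using \<rho> by simp
  finally show ?thesis
    by (simp add: p_def)
qed

theorem mainTheorem9:
  fixes q :: nat
  assumes "q \<ge> 2"
  shows "\<exists>C > 0. \<forall>(\<alpha>::real) (P::nat \<Rightarrow> nat) (\<mu>::nat) (\<nu>::nat) (\<rho>::nat).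
    mono P \<longrightarrow> 2 * \<rho> < \<nu> \<longrightarrow> P (\<mu> + \<nu>) \<le> \<rho> \<longrightarrow>
    real (card {(m, n). q ^ (\<mu> - 2) \<le> m \<and> m \<le> q ^ \<mu> - 1 \<and>
                        q ^ (\<nu> - 2) \<le> n \<and> n \<le> q ^ \<nu> - 1 \<and>
        (\<exists>k < q ^ (\<mu> + \<rho>).
           fP q \<alpha> P (m * n + k) * cnj (fP q \<alpha> P (m * n)) \<noteq>
           fPrho q \<alpha> P (\<mu> + 2 * \<rho>) (m * n + k) * cnj (fPrho q \<alpha> P (\<mu> + 2 * \<rho>) (m * n)))})
    \<le> C * ln (real q) * real q ^ (\<mu> + \<nu> - \<rho> + P (\<mu> + \<nu> + 1))"
proof -
  define C where "C = (3 + real q) / ln (real q)"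
  have ln_q: "ln (real q) > 0"
    using assms by simp
  show ?thesis
    unfolding exceptional_pairs_def[symmetric]
  proof (intro exI[of _ C] conjI allI impI)
    show "C > 0"
      using ln_q by (simp add: C_def)
    fix \<alpha> :: real and P :: "nat \<Rightarrow> nat" and \<mu> \<nu> \<rho> :: nat
    assume P: "mono P" and \<rho>: "2 * \<rho> < \<nu>" and P_le: "P (\<mu> + \<nu>) \<le> \<rho>"
    have "q ^ (\<mu> + \<nu> - \<rho> + P (\<mu> + \<nu>)) \<le> q ^ (\<mu> + \<nu> - \<rho> + P (\<mu> + \<nu> + 1))"
      using assms monoD[OF P, of "\<mu> + \<nu>" "\<mu> + \<nu> + 1"] by (intro power_increasing) auto
    then have "card (exceptional_pairs q \<alpha> P \<mu> \<nu> \<rho>) \<le> (3 + q) * q ^ (\<mu> + \<nu> - \<rho> + P (\<mu> + \<nu> + 1))"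
      using card_exceptional_pairs_le[OF assms P P_le \<rho>] mult_le_mono2 order_trans by blast
    then have "real (card (exceptional_pairs q \<alpha> P \<mu> \<nu> \<rho>))
        \<le> real ((3 + q) * q ^ (\<mu> + \<nu> - \<rho> + P (\<mu> + \<nu> + 1)))"
      by (rule of_nat_mono)
    also have "\<dots> = C * ln (real q) * real q ^ (\<mu> + \<nu> - \<rho> + P (\<mu> + \<nu> + 1))"
      using ln_q by (simp add: C_def)
    finally show "real (card (exceptional_pairs q \<alpha> P \<mu> \<nu> \<rho>))
        \<le> C * ln (real q) * real q ^ (\<mu> + \<nu> - \<rho> + P (\<mu> + \<nu> + 1))" .
  qed
qed

end
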